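(* Let $p,q$ be nonzero polynomials. Then $[p]=[q]$ in $\mathcal H$ if and only if $R(p)=R(q)$ (as multisets).
   Context: Standing assumptions: $\Omega\subset\mathbb C$ is a domain with $0\in\Omega$, $\mathcal H$ is a Hilbert space of analytic functions on $\Omega$ with bounded point evaluations at points of $\Omega$, the shift $(Sf)(z)=zf(z)$ is bounded on $\mathcal H$, and the polynomials $\mathcal P$ are dense in $\mathcal H$. For $g\in\mathcal H$, $[g]$ is the closure in $\mathcal H$ of $\operatorname{span}\{z^kg:k\ge0\}$. A point $\beta\in\mathbb C$ is reproducible of order $m\ge0$ if $p\mapsto p^{(m)}(\beta)$ on $\mathcal P$ extends to a bounded linear functional on $\mathcal H$; $\beta$ is a reproducible point if reproducible of order $0$; reproducibility of order $m$ implies that of all orders $j\le m$; $\operatorname{ro}(\beta)\in\{0,1,\dots\}\cup\{\infty\}$ is the supremum of orders of reproducibility. For a nonzero polynomial $p$, $R(p)$ is the multiset of reproducible zeros: each reproducible point $\beta$ at which $p$ has a zero of order $m\ge1$ is listed $\min\{m,\operatorname{ro}(\beta)+1\}$ times; non-reproducible zeros are omitted. *)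

theory Defs
  imports "HOL-Analysis.Analysis" "HOL-Computational_Algebra.Polynomial" "HOL-Library.Multiset"
    "HOL-Library.Extended_Nat"
begin

text \<open>The abstract Hilbert space is a type 'h of class real_inner + complete_space;
  its complex structure is given by J (multiplication by i), and
  ev x z is the value at z of the analytic function represented by x
  (only the values on Omega matter).  Complex scalar multiplication by c is
  Re c *R x + Im c *R J x.\<close>

definition hfs :: "complex set \<Rightarrow> ('h::{real_inner,complete_space} \<Rightarrow> 'h) \<Rightarrow> ('h \<Rightarrow> complex \<Rightarrow> complex) \<Rightarrow> bool" where
  "hfs \<Omega> J ev \<longleftrightarrow>
     open \<Omega> \<and> connected \<Omega> \<and> 0 \<in> \<Omega> \<and>
     \<comment> \<open>complex Hilbert space structure\<close>
     linear J \<and> (\<forall>x. J (J x) = - x) \<and> (\<forall>x. norm (J x) = norm x) \<and>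
     \<comment> \<open>elements are analytic functions on Omega, identified with their values there\<close>
     (\<forall>x y. ev (x + y) = (\<lambda>z. ev x z + ev y z)) \<and>
     (\<forall>r x. ev (r *\<^sub>R x) = (\<lambda>z. complex_of_real r * ev x z)) \<and>
     (\<forall>x. ev (J x) = (\<lambda>z. \<i> * ev x z)) \<and>
     (\<forall>x. ev x holomorphic_on \<Omega>) \<and>
     (\<forall>x y. (\<forall>z\<in>\<Omega>. ev x z = ev y z) \<longrightarrow> x = y) \<and>
     \<comment> \<open>bounded point evaluations\<close>
     (\<forall>w\<in>\<Omega>. bounded_linear (\<lambda>x. ev x w)) \<and>
     \<comment> \<open>polynomials belong to H and are dense\<close>
     (\<forall>p::complex poly. \<exists>x. \<forall>z\<in>\<Omega>. ev x z = poly p z) \<and>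
     closure {x. \<exists>p::complex poly. \<forall>z\<in>\<Omega>. ev x z = poly p z} = UNIV \<and>
     \<comment> \<open>the shift is bounded\<close>
     (\<exists>S. bounded_linear S \<and> (\<forall>x. \<forall>z\<in>\<Omega>. ev (S x) z = z * ev x z))"

definition cyc :: "complex set \<Rightarrow> ('h::{real_inner,complete_space} \<Rightarrow> complex \<Rightarrow> complex) \<Rightarrow> (complex \<Rightarrow> complex) \<Rightarrow> 'h set" where
  "cyc \<Omega> ev f = closure {x. \<exists>(n::nat) (c::nat \<Rightarrow> complex).
       \<forall>z\<in>\<Omega>. ev x z = (\<Sum>k\<le>n. c k * z ^ k * f z)}"

definition repro :: "complex set \<Rightarrow> ('h::{real_inner,complete_space} \<Rightarrow> 'h) \<Rightarrow> ('h \<Rightarrow> complex \<Rightarrow> complex) \<Rightarrow> nat \<Rightarrow> complex \<Rightarrow> bool" where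
  "repro \<Omega> J ev m \<beta> \<longleftrightarrow>
     (\<exists>L::'h \<Rightarrow> complex. bounded_linear L \<and> (\<forall>x. L (J x) = \<i> * L x) \<and>
        (\<forall>x (p::complex poly). (\<forall>z\<in>\<Omega>. ev x z = poly p z) \<longrightarrow> L x = poly ((pderiv ^^ m) p) \<beta>))"

definition ro :: "complex set \<Rightarrow> ('h::{real_inner,complete_space} \<Rightarrow> 'h) \<Rightarrow> ('h \<Rightarrow> complex \<Rightarrow> complex) \<Rightarrow> complex \<Rightarrow> enat" where
  "ro \<Omega> J ev \<beta> = Sup {enat m | m. repro \<Omega> J ev m \<beta>}"

definition Rz :: "complex set \<Rightarrow> ('h::{real_inner,complete_space} \<Rightarrow> 'h) \<Rightarrow> ('h \<Rightarrow> complex \<Rightarrow> complex) \<Rightarrow> complex poly \<Rightarrow> complex multiset" where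
  "Rz \<Omega> J ev p = (\<Sum>\<beta>\<in>{z. poly p z = 0}.
       if repro \<Omega> J ev 0 \<beta>
       then replicate_mset (the_enat (min (enat (order \<beta> p)) (ro \<Omega> J ev \<beta> + 1))) \<beta>
       else {#})"

end

theory Submission
  imports Defs "HOL-Computational_Algebra.Fundamental_Theorem_Algebra"
begin

text \<open>
  Both sides are invariant under cancelling root factors that do not count in \<open>R\<close>.
  If the derivatives of order below \<open>k\<close> at \<open>b\<close> are bounded but the \<open>k\<close>-th is not,
  then \<open>(z - b)^k\<close> lies in \<open>[(z - b)^(k+1)]\<close>: otherwise the orthogonal projection onto the
  closed subspace \<open>[(z - b)^(k+1)]\<close> yields a bounded complex-linear functional vanishing on
  it, and correcting it by the lower-order functionals along the Taylor expansion at \<open>b\<close>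
  produces a bounded extension of \<open>p \<mapsto> p^(k)(b)\<close>.  Hence \<open>[p]\<close> is unchanged when such
  a factor is removed from \<open>p\<close>, and every \<open>p\<close> reduces to a polynomial whose zeros all count
  fully; two of these with the same \<open>R\<close> are scalar multiples of each other.
  Conversely, if \<open>b\<close> counts \<open>a\<close> times in \<open>R(p)\<close> but more often in \<open>R(q)\<close>, then
  \<open>a = order b p\<close> is reproducible, and the bounded functional \<open>f \<mapsto> f^(a)(b)\<close> vanishes
  on \<open>[q]\<close> but not at \<open>p\<close>.
\<close>

lemma dist_sq_le_of_min_dist:
  fixes C :: "'a::real_inner set"
  assumes "convex C" "x \<in> C" "y \<in> C" "0 \<le> d" "\<And>z. z \<in> C \<Longrightarrow> d \<le> dist a z"
  shows "dist x y ^ 2 \<le> 2 * dist a x ^ 2 + 2 * dist a y ^ 2 - 4 * d ^ 2"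
proof -
  have "(1/2) *\<^sub>R x + (1/2) *\<^sub>R y \<in> C"
    using convexD[OF assms(1-3), of "1/2" "1/2"] by simp
  then have "d \<le> dist a ((1/2) *\<^sub>R x + (1/2) *\<^sub>R y)" by (rule assms(5))
  also have "\<dots> = norm ((1/2) *\<^sub>R ((a - x) + (a - y)))"
    using scaleR_half_double[of a] by (simp add: dist_norm algebra_simps)
  finally have "(2 * d) ^ 2 \<le> norm ((a - x) + (a - y)) ^ 2"
    using assms(4) by (intro power_mono) simp_all
  moreover have "norm (x - y) ^ 2 + norm ((a - x) + (a - y)) ^ 2 = 2 * norm (a - x) ^ 2 + 2 * norm (a - y) ^ 2"
    by (simp add: power2_norm_eq_inner inner_add inner_diff inner_commute algebra_simps)
  ultimately show ?thesis by (simp add: dist_norm power_mult_distrib)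
qed

lemma Cauchy_if_dist_sq_le:
  fixes f :: "nat \<Rightarrow> 'a::metric_space"
  assumes "g \<longlonglongrightarrow> 0" and "\<And>m n. dist (f m) (f n) ^ 2 \<le> g m + g n"
  shows "Cauchy f"
proof (rule metric_CauchyI)
  fix e :: real
  assume "0 < e"
  then have "eventually (\<lambda>n. g n < e ^ 2 / 2) sequentially"
    using assms(1) by (intro order_tendstoD(2)) auto
  then obtain N where N: "\<And>n. N \<le> n \<Longrightarrow> g n < e ^ 2 / 2"
    by (auto simp: eventually_sequentially)
  have "dist (f m) (f n) < e" if "N \<le> m" "N \<le> n" for m n
  proof (rule power_less_imp_less_base)
    show "dist (f m) (f n) ^ 2 < e ^ 2" using assms(2)[of m n] N[OF that(1)] N[OF that(2)] by linarith
  qed (use \<open>0 < e\<close> in simp)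
  then show "\<exists>M. \<forall>m\<ge>M. \<forall>n\<ge>M. dist (f m) (f n) < e" by blast
qed

lemma closed_convex_nearest_point:
  fixes C :: "'a::{real_inner,complete_space} set"
  assumes "closed C" "convex C" "C \<noteq> {}"
  obtains m where "m \<in> C" "\<And>y. y \<in> C \<Longrightarrow> dist a m \<le> dist a y"
proof -
  define d where "d = infdist a C"
  have d: "0 \<le> d" "\<And>y. y \<in> C \<Longrightarrow> d \<le> dist a y"
    by (simp_all add: d_def infdist_nonneg infdist_le)
  have "\<exists>y\<in>C. dist a y < d + 1 / Suc n" for n :: nat
  proof -
    have "(INF y\<in>C. dist a y) < d + 1 / Suc n"
      using infdist_notempty[OF assms(3), of a] d_def by simp
    then show ?thesis
      by (subst (asm) cINF_less_iff) (auto intro!: bdd_belowI[of _ 0] simp: assms(3))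
  qed
  then obtain f where fC: "\<And>n. f n \<in> C" and fd: "\<And>n. dist a (f n) < d + 1 / Suc n"
    by metis
  define g where "g n = 2 * ((d + 1 / Suc n) ^ 2 - d ^ 2)" for n :: nat
  have "g \<longlonglongrightarrow> 2 * ((d + 0) ^ 2 - d ^ 2)"
    unfolding g_def by (intro tendsto_intros LIMSEQ_inverse_real_of_nat[unfolded inverse_eq_divide])
  moreover have "dist (f m) (f n) ^ 2 \<le> g m + g n" for m n
  proof -
    have fd2: "dist a (f k) ^ 2 \<le> (d + 1 / Suc k) ^ 2" for k
      using fd[of k] d(1) by (intro power_mono) (auto intro: less_imp_le order_trans[OF d(2)[OF fC]])
    have "dist (f m) (f n) ^ 2 \<le> 2 * dist a (f m) ^ 2 + 2 * dist a (f n) ^ 2 - 4 * d ^ 2"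
      by (rule dist_sq_le_of_min_dist[OF assms(2) fC fC d(1)]) (rule d(2))
    then show ?thesis using fd2[of m] fd2[of n] unfolding g_def by (simp add: algebra_simps)
  qed
  ultimately have "Cauchy f" by (intro Cauchy_if_dist_sq_le[of g]) simp_all
  then obtain l where l: "f \<longlonglongrightarrow> l" using Cauchy_convergent_iff convergent_def by blast
  have "l \<in> C" using closed_sequentially[OF assms(1) _ l] fC by auto
  moreover have "dist a l \<le> d"
  proof (rule LIMSEQ_le)
    show "(\<lambda>n. dist a (f n)) \<longlonglongrightarrow> dist a l" by (intro tendsto_intros l)
    show "(\<lambda>n. d + 1 / real (Suc n)) \<longlonglongrightarrow> d"
      using LIMSEQ_inverse_real_of_nat[unfolded inverse_eq_divide]
      by (metis add.right_neutral tendsto_add_const_iff)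
  qed (use fd less_imp_le in blast)
  ultimately show ?thesis using that d(2) order_trans by blast
qed

lemma subspace_orthogonal_not_in_closure:
  fixes S :: "'a::{real_inner,complete_space} set"
  assumes "subspace S" "u \<notin> closure S"
  obtains v where "\<And>s. s \<in> S \<Longrightarrow> inner s v = 0" "inner u v \<noteq> 0"
proof -
  have cS: "convex (closure S)" using assms(1) by (simp add: convex_closure subspace_imp_convex)
  have "closure S \<noteq> {}" using assms(1) closure_subset subspace_0 by blast
  then obtain m where m: "m \<in> closure S" and mmin: "\<And>y. y \<in> closure S \<Longrightarrow> dist u m \<le> dist u y"
    using closed_convex_nearest_point[OF closed_closure cS] by blast
  have "m + s \<in> closure S" if "s \<in> S" for s
  proof -
    have "(\<lambda>x. x + s) ` closure S \<subseteq> closure S"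
    proof (rule image_closure_subset)
      show "(\<lambda>x. x + s) ` S \<subseteq> closure S"
        using assms(1) that closure_subset subspace_add by blast
    qed (auto intro: continuous_intros)
    then show ?thesis using m by auto
  qed
  then have "inner (u - m) s \<le> 0" if "s \<in> S" for s
    using any_closest_point_dot[OF cS closed_closure m _ ballI[OF mmin], of "m + s"] that by simp
  then have perp: "inner s (u - m) = 0" if "s \<in> S" for s
    using that assms(1) subspace_neg[of S s]
    by (metis inner_commute inner_minus_right neg_le_0_iff_le order_antisym)
  have "closure S \<subseteq> {x. inner x (u - m) = 0}"
    using perp closed_hyperplane[of "u - m" 0]
    by (intro closure_minimal) (auto simp: inner_commute)
  then have "inner m (u - m) = 0" using m by blast
  have "inner u (u - m) = inner (u - m) (u - m) + inner m (u - m)"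
    by (simp add: inner_diff_left inner_commute)
  then have "inner u (u - m) \<noteq> 0" using \<open>inner m (u - m) = 0\<close> m assms(2) by auto
  then show ?thesis using that perp by blast
qed

definition Dpoly :: "nat \<Rightarrow> 'a::idom poly \<Rightarrow> 'a \<Rightarrow> 'a" where
  "Dpoly j p b = poly ((pderiv ^^ j) p) b"

lemma higher_pderiv_diff:
  "(pderiv ^^ n) (p - q) = (pderiv ^^ n) p - (pderiv ^^ n) (q :: 'a::idom poly)"
  by (induction n) (simp_all add: pderiv_diff)

lemma Dpoly_0: "Dpoly 0 p b = poly p b"
  by (simp add: Dpoly_def)

lemma Dpoly_diff: "Dpoly j (p - q) b = Dpoly j p b - Dpoly j q (b :: 'a::idom)"
  by (simp add: Dpoly_def higher_pderiv_diff)

lemma Dpoly_smult: "Dpoly j (smult c p) b = c * Dpoly j p b"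
  by (simp add: Dpoly_def higher_pderiv_smult)

lemma Dpoly_sum: "Dpoly j (\<Sum>i\<in>A. f i) b = (\<Sum>i\<in>A. Dpoly j (f i) b)"
  by (simp add: Dpoly_def higher_pderiv_sum poly_sum)

lemma higher_pderiv_mult_of_pderiv_1:
  fixes X p :: "'a::idom poly"
  assumes "pderiv X = 1"
  shows "(pderiv ^^ Suc j) (X * p) = smult (of_nat (Suc j)) ((pderiv ^^ j) p) + X * (pderiv ^^ Suc j) p"
proof (induction j)
  case 0
  show ?case by (simp add: pderiv_mult assms)
next
  case (Suc j)
  have "(pderiv ^^ Suc (Suc j)) (X * p) = pderiv (smult (of_nat (Suc j)) ((pderiv ^^ j) p) + X * (pderiv ^^ Suc j) p)"
    using Suc by simp
  also have "\<dots> = smult (of_nat (Suc (Suc j))) ((pderiv ^^ Suc j) p) + X * (pderiv ^^ Suc (Suc j)) p"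
    by (simp add: pderiv_add pderiv_smult pderiv_mult assms of_nat_Suc smult_add_left add_ac numeral_mult_conv_smult)
  finally show ?case .
qed

lemma pderiv_linear_factor: "pderiv [:-b, 1:] = 1"
  by (simp add: pderiv_pCons)

lemma Dpoly_linear_factor_mult:
  "Dpoly (Suc j) ([:-b, 1:] * p) b = of_nat (Suc j) * Dpoly j p (b :: 'a::idom)"
  unfolding Dpoly_def higher_pderiv_mult_of_pderiv_1[OF pderiv_linear_factor] by simp

lemma root_power_Suc_mult: "[:-b, 1:] ^ Suc m * p = [:-b, 1:] * ([:-b, 1:] ^ m * p)"
  by (simp only: power_Suc mult.assoc)

lemma Dpoly_root_power_mult_below:
  "j < m \<Longrightarrow> Dpoly j ([:-b, 1:] ^ m * p) (b :: 'a::idom) = 0"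
proof (induction m arbitrary: j)
  case (Suc m)
  show ?case
  proof (cases j)
    case 0
    then show ?thesis unfolding root_power_Suc_mult by (simp add: Dpoly_def)
  next
    case (Suc i)
    then have "Dpoly i ([:-b, 1:] ^ m * p) b = 0" using Suc.IH Suc.prems by simp
    then show ?thesis unfolding \<open>j = Suc i\<close> root_power_Suc_mult Dpoly_linear_factor_mult by simp
  qed
qed simp

lemma Dpoly_root_power_mult:
  "Dpoly m ([:-b, 1:] ^ m * p) b = fact m * poly p (b :: 'a::{idom,ring_char_0})"
proof (induction m)
  case (Suc m)
  show ?case unfolding root_power_Suc_mult Dpoly_linear_factor_mult Suc by simp
qed (simp add: Dpoly_0)

lemma higher_pderiv_eq_0_if_degree_less:
  "degree p < n \<Longrightarrow> (pderiv ^^ n) p = (0 :: 'a::{idom,ring_char_0} poly)"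
  by (intro poly_eqI) (simp add: coeff_higher_pderiv coeff_eq_0)

lemma Dpoly_root_power:
  "Dpoly i ([:-b, 1:] ^ j) b = (if i = j then fact i else (0 :: 'a::{idom,ring_char_0}))"
proof -
  consider "i < j" | "i = j" | "j < i" by linarith
  then show ?thesis
  proof cases
    case 1 then show ?thesis using Dpoly_root_power_mult_below[of i j b 1] by simp
  next
    case 2 then show ?thesis using Dpoly_root_power_mult[of j b 1] by simp
  next
    case 3 then show ?thesis by (simp add: Dpoly_def degree_power_eq higher_pderiv_eq_0_if_degree_less)
  qed
qed

lemma Dpoly_order_neq_0:
  "p \<noteq> 0 \<Longrightarrow> Dpoly (order b p) p b \<noteq> (0 :: 'a::{idom,ring_char_0})"
proof -
  assume "p \<noteq> 0"
  then obtain f where f: "p = [:-b, 1:] ^ order b p * f" and "\<not> [:-b, 1:] dvd f"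
    using order_decomp by blast
  then have "poly f b \<noteq> 0" by (simp add: poly_eq_0_iff_dvd)
  then show ?thesis by (subst f) (simp add: Dpoly_root_power_mult)
qed

lemma Dpoly_eq_0_if_root_power_dvd:
  "j < n \<Longrightarrow> [:-b, 1:] ^ n dvd p \<Longrightarrow> Dpoly j p (b :: 'a::idom) = 0"
  by (elim dvdE) (simp add: Dpoly_root_power_mult_below)

lemma root_power_dvd_if_Dpoly_eq_0:
  assumes "\<And>j. j < k \<Longrightarrow> Dpoly j p b = (0 :: 'a::{idom,ring_char_0})"
  shows "[:-b, 1:] ^ k dvd p"
proof (cases "p = 0")
  case False
  then have "k \<le> order b p" using assms Dpoly_order_neq_0 not_le by blast
  then show ?thesis by (simp add: order_divides)
qed simp

lemma taylor_poly_remainder: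
  fixes p :: "'a::field_char_0 poly"
  obtains s where "p = (\<Sum>j\<le>k. smult (Dpoly j p b / fact j) ([:-b, 1:] ^ j)) + [:-b, 1:] ^ Suc k * s"
proof -
  define r where "r = p - (\<Sum>j\<le>k. smult (Dpoly j p b / fact j) ([:-b, 1:] ^ j))"
  have "Dpoly i r b = 0" if "i < Suc k" for i
  proof -
    have "(\<Sum>j\<le>k. Dpoly j p b / fact j * Dpoly i ([:-b, 1:] ^ j) b) = Dpoly i p b"
      using that by (simp add: Dpoly_root_power if_distrib cong: if_cong)
    then show ?thesis by (simp add: r_def Dpoly_diff Dpoly_sum Dpoly_smult)
  qed
  then obtain s where "r = [:-b, 1:] ^ Suc k * s"
    using root_power_dvd_if_Dpoly_eq_0 by (meson dvdE)
  then show ?thesis using that by (simp add: r_def algebra_simps)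
qed

lemma order_linear_factor: "order \<gamma> [:-b, 1:] = (if \<gamma> = b then 1 else (0 :: nat))"
  using order_power_n_n[of b 1] by (auto intro: order_0I)

lemma complex_poly_eq_smult_if_order_eq:
  fixes p q :: "complex poly"
  assumes "p \<noteq> 0" "q \<noteq> 0" "\<And>b. order b p = order b q"
  shows "p = smult (lead_coeff p / lead_coeff q) q"
proof -
  define P where "P = (\<Prod>x\<in>#proots q. [:-x, 1:])"
  have "proots p = proots q" using assms by (intro multiset_eqI) simp
  then have p: "p = smult (lead_coeff p) P"
    unfolding P_def by (metis complex_poly_decompose_multiset)
  have q: "q = smult (lead_coeff q) P"
    unfolding P_def by (metis complex_poly_decompose_multiset)
  have "smult (lead_coeff p / lead_coeff q) (smult (lead_coeff q) P) = smult (lead_coeff p) P"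
    using assms(2) by simp
  then show ?thesis using p q by metis
qed

definition cscale :: "('h::real_vector \<Rightarrow> 'h) \<Rightarrow> complex \<Rightarrow> 'h \<Rightarrow> 'h" where
  "cscale J c x = Re c *\<^sub>R x + Im c *\<^sub>R J x"

locale complex_structure =
  fixes J :: "'h::{real_inner,complete_space} \<Rightarrow> 'h"
  assumes linear_J: "linear J" and J_J [simp]: "J (J x) = - x" and norm_J [simp]: "norm (J x) = norm x"
begin

definition cfunctional :: "('h \<Rightarrow> complex) \<Rightarrow> bool" where
  "cfunctional L \<longleftrightarrow> bounded_linear L \<and> (\<forall>x. L (J x) = \<i> * L x)"

lemma J_add: "J (x + y) = J x + J y" and J_scaleR: "J (r *\<^sub>R x) = r *\<^sub>R J x"
  using linear_J by (simp_all add: linear_add linear_scale)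

lemma bounded_linear_J: "bounded_linear J"
  by (rule bounded_linear_intro[of J 1]) (simp_all add: J_add J_scaleR)

lemma inner_J_J: "inner (J x) (J y) = inner x y"
proof -
  have "norm (J x + J y) ^ 2 = norm (x + y) ^ 2" by (metis J_add norm_J)
  moreover have "inner (J z) (J z) = inner z z" for z by (metis norm_J power2_norm_eq_inner)
  ultimately show ?thesis by (simp add: power2_norm_eq_inner inner_add inner_commute)
qed

lemma inner_J_right: "inner x (J y) = - inner (J x) y"
  using inner_J_J[of x "J y"] by simp

lemma bounded_linear_cscale: "bounded_linear (cscale J c)"
  unfolding cscale_def
  by (intro bounded_linear_add bounded_linear_scaleR_right bounded_linear_compose[OF _ bounded_linear_J])

lemma cfunctional_cscale: "cfunctional L \<Longrightarrow> L (cscale J c x) = c * L x"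
  unfolding cfunctional_def cscale_def
  by (simp add: linear_add[OF bounded_linear.linear] linear_scale[OF bounded_linear.linear]
      complex_eq_iff)

lemma cfunctional_linear: "cfunctional L \<Longrightarrow> linear L"
  by (simp add: cfunctional_def bounded_linear.linear)

lemma cfunctional_add: "cfunctional L \<Longrightarrow> cfunctional M \<Longrightarrow> cfunctional (\<lambda>x. L x + M x)"
  by (simp add: cfunctional_def bounded_linear_add distrib_left)

lemma cfunctional_diff: "cfunctional L \<Longrightarrow> cfunctional M \<Longrightarrow> cfunctional (\<lambda>x. L x - M x)"
  by (simp add: cfunctional_def bounded_linear_sub right_diff_distrib)

lemma cfunctional_mult_left: "cfunctional L \<Longrightarrow> cfunctional (\<lambda>x. c * L x)"
  by (simp add: cfunctional_def bounded_linear_mult_right[THEN bounded_linear_compose] mult.left_commute)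

lemma cfunctional_zero: "cfunctional (\<lambda>x. 0)"
  by (simp add: cfunctional_def bounded_linear_zero)

lemma cfunctional_sum: "(\<And>i. i \<in> A \<Longrightarrow> cfunctional (L i)) \<Longrightarrow> cfunctional (\<lambda>x. \<Sum>i\<in>A. L i x)"
  by (induction A rule: infinite_finite_induct) (simp_all add: cfunctional_zero cfunctional_add)

lemma cfunctional_comp:
  assumes "cfunctional L" "bounded_linear T" "\<And>x. T (J x) = J (T x)"
  shows "cfunctional (\<lambda>x. L (T x))"
  using assms by (simp add: cfunctional_def bounded_linear_compose)

lemma cfunctional_inner: "cfunctional (\<lambda>x. of_real (inner x v) + \<i> * of_real (inner x (J v)))"
  unfolding cfunctional_def
proof
  show "bounded_linear (\<lambda>x. of_real (inner x v) + \<i> * of_real (inner x (J v)))"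
    by (intro bounded_linear_add bounded_linear_compose[OF bounded_linear_mult_right]
        bounded_linear_compose[OF bounded_linear_of_real] bounded_linear_inner_left)
  show "\<forall>x. of_real (inner (J x) v) + \<i> * of_real (inner (J x) (J v)) =
    \<i> * (of_real (inner x v) + \<i> * of_real (inner x (J v)))"
    by (simp add: inner_J_J inner_J_right[of _ v] algebra_simps)
qed

lemma cfunctional_separating:
  assumes "subspace M" "\<And>x. x \<in> M \<Longrightarrow> J x \<in> M" "u \<notin> closure M"
  obtains \<phi> where "cfunctional \<phi>" "\<And>x. x \<in> M \<Longrightarrow> \<phi> x = 0" "\<phi> u \<noteq> 0"
proof -
  obtain v where v: "\<And>s. s \<in> M \<Longrightarrow> inner s v = 0" and uv: "inner u v \<noteq> 0"
    using subspace_orthogonal_not_in_closure[OF assms(1,3)] by blast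
  have "inner x (J v) = 0" if "x \<in> M" for x
    using v[OF assms(2)[OF that]] by (simp add: inner_J_right)
  then show ?thesis
    using that[OF cfunctional_inner[of v]] v uv by (simp add: complex_eq_iff)
qed

end

locale hfs_space =
  fixes Om :: "complex set" and J :: "'h::{real_inner,complete_space} \<Rightarrow> 'h"
    and ev :: "'h \<Rightarrow> complex \<Rightarrow> complex"
  assumes hfs: "hfs Om J ev"

sublocale hfs_space \<subseteq> complex_structure J
  using hfs by (intro complex_structure.intro) (simp_all add: hfs_def)

context hfs_space
begin

abbreviation reproducible :: "nat \<Rightarrow> complex \<Rightarrow> bool" where
  "reproducible m b \<equiv> repro Om J ev m b"

lemma ev_add: "ev (x + y) z = ev x z + ev y z"
  and ev_scaleR: "ev (r *\<^sub>R x) z = of_real r * ev x z"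
  and ev_J: "ev (J x) z = \<i> * ev x z"
  using hfs by (simp_all add: hfs_def)

lemma ev_inj: "(\<And>z. z \<in> Om \<Longrightarrow> ev x z = ev y z) \<Longrightarrow> x = y"
  using hfs by (simp add: hfs_def)

lemma ev_zero: "ev 0 z = 0"
  using ev_scaleR[of 0 0 z] by simp

lemma ev_sum: "ev (\<Sum>i\<in>A. f i) z = (\<Sum>i\<in>A. ev (f i) z)"
  by (induction A rule: infinite_finite_induct) (simp_all add: ev_zero ev_add)

lemma ev_cscale: "ev (cscale J c x) z = c * ev x z"
  by (simp add: cscale_def ev_add ev_scaleR ev_J complex_eq_iff)

definition hpoly :: "complex poly \<Rightarrow> 'h" where
  "hpoly p = (SOME x. \<forall>z\<in>Om. ev x z = poly p z)"

lemma ev_hpoly: "z \<in> Om \<Longrightarrow> ev (hpoly p) z = poly p z"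
  using hfs someI_ex[of "\<lambda>x. \<forall>z\<in>Om. ev x z = poly p z"] by (simp add: hfs_def hpoly_def)

lemma eq_hpoly_iff: "(\<forall>z\<in>Om. ev x z = poly p z) \<longleftrightarrow> x = hpoly p"
  using ev_inj ev_hpoly by metis

lemma hpoly_add: "hpoly (p + q) = hpoly p + hpoly q"
  by (rule ev_inj) (simp add: ev_add ev_hpoly)

lemma hpoly_smult: "hpoly (smult c p) = cscale J c (hpoly p)"
  by (rule ev_inj) (simp add: ev_cscale ev_hpoly)

lemma hpoly_sum: "hpoly (\<Sum>i\<in>A. f i) = (\<Sum>i\<in>A. hpoly (f i))"
  by (rule ev_inj) (simp add: ev_sum ev_hpoly poly_sum)

lemma repro_iff:
  "reproducible m b \<longleftrightarrow> (\<exists>L. cfunctional L \<and> (\<forall>p. L (hpoly p) = Dpoly m p b))"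
  unfolding repro_def cfunctional_def Dpoly_def eq_hpoly_iff by blast

definition shift :: "'h \<Rightarrow> 'h" where
  "shift = (SOME S. bounded_linear S \<and> (\<forall>x. \<forall>z\<in>Om. ev (S x) z = z * ev x z))"

lemma bounded_linear_shift: "bounded_linear shift"
  and ev_shift: "z \<in> Om \<Longrightarrow> ev (shift x) z = z * ev x z"
  using hfs someI_ex[of "\<lambda>S. bounded_linear S \<and> (\<forall>x. \<forall>z\<in>Om. ev (S x) z = z * ev x z)"]
  by (simp_all add: hfs_def shift_def)

definition pmult :: "complex poly \<Rightarrow> 'h \<Rightarrow> 'h" where
  "pmult f x = (\<Sum>k\<le>degree f. cscale J (coeff f k) ((shift ^^ k) x))"

lemma ev_pmult: "z \<in> Om \<Longrightarrow> ev (pmult f x) z = poly f z * ev x z"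
proof -
  assume z: "z \<in> Om"
  have "ev ((shift ^^ k) x) z = z ^ k * ev x z" for k
    by (induction k) (simp_all add: ev_shift z)
  then show ?thesis
    by (simp add: pmult_def ev_sum ev_cscale poly_altdef sum_distrib_right mult.assoc)
qed

lemma bounded_linear_pmult: "bounded_linear (pmult f)"
proof -
  have "bounded_linear (shift ^^ k)" for k
    by (induction k) (simp_all add: bounded_linear_compose[OF bounded_linear_shift])
  then show ?thesis
    unfolding pmult_def by (intro bounded_linear_sum bounded_linear_compose[OF bounded_linear_cscale])
qed

lemma pmult_J: "pmult f (J x) = J (pmult f x)"
  by (rule ev_inj) (simp add: ev_pmult ev_J)

lemma pmult_hpoly: "pmult f (hpoly p) = hpoly (f * p)"
  by (rule ev_inj) (simp add: ev_pmult ev_hpoly)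

lemma repro_SucD: "reproducible (Suc m) b \<Longrightarrow> reproducible m b"
proof -
  assume "reproducible (Suc m) b"
  then obtain L where L: "cfunctional L" "\<And>p. L (hpoly p) = Dpoly (Suc m) p b"
    unfolding repro_iff by blast
  define L' where "L' x = 1 / of_nat (Suc m) * L (pmult [:-b, 1:] x)" for x
  have "cfunctional L'"
    unfolding L'_def
    by (rule cfunctional_mult_left, rule cfunctional_comp[OF L(1) bounded_linear_pmult pmult_J])
  moreover have "L' (hpoly p) = Dpoly m p b" for p
    unfolding L'_def pmult_hpoly L(2) Dpoly_linear_factor_mult by (simp del: of_nat_Suc)
  ultimately show ?thesis unfolding repro_iff by blast
qed

lemma repro_mono: "j \<le> m \<Longrightarrow> reproducible m b \<Longrightarrow> reproducible j b"
  by (induction rule: dec_induct) (auto dest: repro_SucD)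

definition pmultiples :: "complex poly \<Rightarrow> 'h set" where
  "pmultiples q = range (\<lambda>r. hpoly (r * q))"

lemma cyc_eq_closure_pmultiples: "cyc Om ev (poly q) = closure (pmultiples q)"
proof -
  have "(\<exists>n c. \<forall>z\<in>Om. ev x z = (\<Sum>k\<le>n. c k * z ^ k * poly q z)) \<longleftrightarrow> x \<in> pmultiples q" for x
  proof
    assume "\<exists>n c. \<forall>z\<in>Om. ev x z = (\<Sum>k\<le>n. c k * z ^ k * poly q z)"
    then obtain n c where "\<forall>z\<in>Om. ev x z = (\<Sum>k\<le>n. c k * z ^ k * poly q z)" by blast
    then have "x = hpoly ((\<Sum>k\<le>n. monom (c k) k) * q)"
      unfolding eq_hpoly_iff[symmetric] by (simp add: poly_sum poly_monom sum_distrib_right)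
    then show "x \<in> pmultiples q" by (simp add: pmultiples_def)
  next
    assume "x \<in> pmultiples q"
    then obtain r where "x = hpoly (r * q)" by (auto simp: pmultiples_def)
    then have "\<forall>z\<in>Om. ev x z = (\<Sum>k\<le>degree r. coeff r k * z ^ k * poly q z)"
      by (simp add: ev_hpoly poly_altdef[of r] sum_distrib_right)
    then show "\<exists>n c. \<forall>z\<in>Om. ev x z = (\<Sum>k\<le>n. c k * z ^ k * poly q z)" by blast
  qed
  then show ?thesis by (simp add: cyc_def)
qed

lemma hpoly_mult_in_pmultiples: "hpoly (r * q) \<in> pmultiples q"
  by (simp add: pmultiples_def)

lemma hpoly_in_pmultiples: "hpoly q \<in> pmultiples q"
  using hpoly_mult_in_pmultiples[of 1 q] by simp

lemma cscale_pmultiples: "x \<in> pmultiples q \<Longrightarrow> cscale J c x \<in> pmultiples q"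
proof -
  assume "x \<in> pmultiples q"
  then obtain r where "x = hpoly (r * q)" by (auto simp: pmultiples_def)
  then have "cscale J c x = hpoly (smult c r * q)" by (simp add: hpoly_smult)
  then show ?thesis by (simp only: hpoly_mult_in_pmultiples)
qed

lemma subspace_pmultiples: "subspace (pmultiples q)"
  unfolding subspace_def
proof safe
  show "0 \<in> pmultiples q"
    using cscale_pmultiples[OF hpoly_in_pmultiples, of 0] by (simp add: cscale_def)
  fix x y a assume x: "x \<in> pmultiples q" and y: "y \<in> pmultiples q"
  then obtain r r' where "x = hpoly (r * q)" "y = hpoly (r' * q)" by (auto simp: pmultiples_def)
  then have "x + y = hpoly ((r + r') * q)" by (simp add: hpoly_add distrib_right)
  then show "x + y \<in> pmultiples q" by (simp add: pmultiples_def)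
  show "a *\<^sub>R x \<in> pmultiples q"
    using cscale_pmultiples[OF x, of "of_real a"] by (simp add: cscale_def)
qed

lemma J_pmultiples: "x \<in> pmultiples q \<Longrightarrow> J x \<in> pmultiples q"
  using cscale_pmultiples[of x q \<i>] by (simp add: cscale_def)

lemma pmultiples_mult_subset: "pmultiples (f * q) \<subseteq> pmultiples q"
  unfolding pmultiples_def by (auto simp: mult.assoc[symmetric])

lemma pmultiples_smult: "c \<noteq> 0 \<Longrightarrow> pmultiples (smult c q) = pmultiples q"
proof
  show "pmultiples (smult c q) \<subseteq> pmultiples q"
    using pmultiples_mult_subset[of "[:c:]" q] by simp
  assume "c \<noteq> 0"
  then have "q = [:inverse c:] * smult c q" by simp
  then show "pmultiples q \<subseteq> pmultiples (smult c q)"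
    using pmultiples_mult_subset[of "[:inverse c:]" "smult c q"] by simp
qed

lemma pmult_closure_pmultiples: "pmult f ` closure (pmultiples q) \<subseteq> closure (pmultiples (f * q))"
proof (rule image_closure_subset)
  have "pmult f (hpoly (r * q)) \<in> pmultiples (f * q)" for r
    unfolding pmult_hpoly mult.left_commute[of f] by (rule hpoly_mult_in_pmultiples)
  then show "pmult f ` pmultiples q \<subseteq> closure (pmultiples (f * q))"
    using closure_subset by (auto simp: pmultiples_def)
qed (simp_all add: linear_continuous_on bounded_linear_pmult)

lemma closure_pmultiples_subset:
  assumes "hpoly p \<in> closure (pmultiples q)"
  shows "closure (pmultiples p) \<subseteq> closure (pmultiples q)"
proof (rule closure_minimal)
  show "pmultiples p \<subseteq> closure (pmultiples q)"
  proof
    fix x assume "x \<in> pmultiples p"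
    then obtain r where "x = pmult r (hpoly p)" by (auto simp: pmultiples_def pmult_hpoly)
    also have "\<dots> \<in> closure (pmultiples (r * q))" using pmult_closure_pmultiples assms by blast
    also have "\<dots> \<subseteq> closure (pmultiples q)" by (intro closure_mono pmultiples_mult_subset)
    finally show "x \<in> closure (pmultiples q)" .
  qed
qed simp

text \<open>\<open>rmult p b\<close> is the multiplicity of \<open>b\<close> in the multiset \<open>R(p)\<close>, see \<open>count_Rz\<close>.\<close>
definition rmult :: "complex poly \<Rightarrow> complex \<Rightarrow> nat" where
  "rmult p b = card {j. j < order b p \<and> reproducible j b}"

lemma rmult_spec:
  shows repro_less_rmult: "j < rmult p b \<Longrightarrow> reproducible j b"
    and rmult_le_order: "rmult p b \<le> order b p"
    and not_repro_rmult: "rmult p b < order b p \<Longrightarrow> \<not> reproducible (rmult p b) b"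
proof -
  have "(\<forall>j<rmult p b. reproducible j b) \<and> rmult p b \<le> order b p \<and>
    (rmult p b < order b p \<longrightarrow> \<not> reproducible (rmult p b) b)"
  proof (cases "\<forall>j<order b p. reproducible j b")
    case True
    then have "{j. j < order b p \<and> reproducible j b} = {..<order b p}" by auto
    then show ?thesis using True by (simp add: rmult_def)
  next
    case False
    then obtain i where i: "i < order b p" "\<not> reproducible i b" by blast
    obtain k where k: "\<not> reproducible k b" "\<And>j. j < k \<Longrightarrow> reproducible j b"
      using i(2) exists_least_iff[of "\<lambda>j. \<not> reproducible j b"] by blast
    have "k \<le> i" using i(2) k(2) not_less by blast
    have repro_k: "reproducible j b \<longleftrightarrow> j < k" for j
      using k repro_mono[of k j b] by (cases "j < k") auto
    have "{j. j < order b p \<and> reproducible j b} = {..<k}"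
      unfolding repro_k using i(1) \<open>k \<le> i\<close> by auto
    then show ?thesis using i(1) \<open>k \<le> i\<close> k by (simp add: rmult_def)
  qed
  then show "j < rmult p b \<Longrightarrow> reproducible j b" "rmult p b \<le> order b p"
    "rmult p b < order b p \<Longrightarrow> \<not> reproducible (rmult p b) b" by blast+
qed

lemma repro_iff_less_rmult: "rmult p b < order b p \<Longrightarrow> reproducible j b \<longleftrightarrow> j < rmult p b"
  using repro_less_rmult not_repro_rmult repro_mono not_le by metis

lemma enat_le_ro: "reproducible m b \<Longrightarrow> enat m \<le> ro Om J ev b"
  unfolding ro_def by (rule Sup_upper) blast

lemma ro_le_enat:
  assumes "\<not> reproducible (Suc m) b"
  shows "ro Om J ev b \<le> enat m"
  unfolding ro_def
proof (rule Sup_least)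
  fix x assume "x \<in> {enat j |j. reproducible j b}"
  then obtain j where "x = enat j" "reproducible j b" by blast
  moreover have "j \<le> m" using repro_mono[of "Suc m" j b] assms \<open>reproducible j b\<close> by (cases "j \<le> m") auto
  ultimately show "x \<le> enat m" by simp
qed

lemma min_order_ro_eq_rmult:
  assumes "reproducible 0 b"
  shows "min (enat (order b p)) (ro Om J ev b + 1) = enat (rmult p b)"
proof (cases "rmult p b < order b p")
  case True
  then obtain c where c: "rmult p b = Suc c"
    using assms not_repro_rmult by (metis not0_implies_Suc)
  then have "ro Om J ev b = enat c"
    using ro_le_enat[of c b] enat_le_ro[of c b] not_repro_rmult[OF True] repro_less_rmult[of c p b]
    by simp
  then show ?thesis using True c by (simp add: one_enat_def)
next
  case False
  then have "rmult p b = order b p" using rmult_le_order by (simp add: le_antisym)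
  moreover have "enat (order b p) \<le> ro Om J ev b + 1"
  proof (cases "order b p")
    case (Suc c)
    then have "reproducible c b" using \<open>rmult p b = order b p\<close> repro_less_rmult[of c p b] by simp
    then have "enat c \<le> ro Om J ev b" by (rule enat_le_ro)
    then show ?thesis using Suc by (simp add: eSuc_enat[symmetric] eSuc_plus_1[symmetric])
  qed (simp add: zero_enat_def[symmetric])
  ultimately show ?thesis by (simp add: min_def)
qed

lemma count_Rz:
  assumes "p \<noteq> 0"
  shows "count (Rz Om J ev p) b = rmult p b"
proof -
  let ?N = "\<lambda>\<gamma>. the_enat (min (enat (order \<gamma> p)) (ro Om J ev \<gamma> + 1))"
  have "count (Rz Om J ev p) b =
      (\<Sum>\<gamma>\<in>{z. poly p z = 0}. if \<gamma> = b then (if reproducible 0 b then ?N b else 0) else 0)"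
    unfolding Rz_def count_sum by (intro sum.cong) auto
  also have "\<dots> = (if poly p b = 0 \<and> reproducible 0 b then ?N b else 0)"
    using poly_roots_finite[OF assms] by simp
  also have "\<dots> = rmult p b"
  proof (cases "poly p b = 0 \<and> reproducible 0 b")
    case True
    then show ?thesis using min_order_ro_eq_rmult[of b p] by simp
  next
    case False
    then have "rmult p b = 0"
      using rmult_le_order[of p b] repro_less_rmult[of 0 p b] order_0I[of p b] by auto
    then show ?thesis unfolding if_not_P[OF False] by simp
  qed
  finally show ?thesis .
qed

lemma repro_if_not_in_closure:
  assumes low: "\<And>j. j < k \<Longrightarrow> reproducible j b"
    and u: "hpoly ([:-b, 1:] ^ k) \<notin> closure (pmultiples ([:-b, 1:] ^ Suc k))"
  shows "reproducible k b"
proof -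
  let ?X = "[:-b, 1:]"
  have "\<forall>j. \<exists>L. j < k \<longrightarrow> cfunctional L \<and> (\<forall>p. L (hpoly p) = Dpoly j p b)"
    using low unfolding repro_iff by blast
  then obtain L where L: "\<And>j. j < k \<Longrightarrow> cfunctional (L j)"
    "\<And>j p. j < k \<Longrightarrow> L j (hpoly p) = Dpoly j p b"
    by metis
  obtain \<phi> where \<phi>: "cfunctional \<phi>" "\<And>x. x \<in> pmultiples (?X ^ Suc k) \<Longrightarrow> \<phi> x = 0"
    "\<phi> (hpoly (?X ^ k)) \<noteq> 0"
    using cfunctional_separating[OF subspace_pmultiples J_pmultiples u] by blast
  text \<open>Subtract from \<open>\<phi>\<close> its values on the Taylor terms of order below \<open>k\<close>, which are
    known through the functionals \<open>L j\<close>; what remains sees only the \<open>k\<close>-th Taylor coefficient.\<close>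
  define \<Lambda> where "\<Lambda> x = fact k / \<phi> (hpoly (?X ^ k)) *
      (\<phi> x - (\<Sum>j<k. \<phi> (hpoly (?X ^ j)) / fact j * L j x))" for x
  have "cfunctional \<Lambda>"
    unfolding \<Lambda>_def using \<phi>(1) L(1)
    by (intro cfunctional_mult_left cfunctional_diff cfunctional_sum) simp_all
  moreover have "\<Lambda> (hpoly p) = Dpoly k p b" for p
  proof -
    obtain s where s: "p = (\<Sum>j\<le>k. smult (Dpoly j p b / fact j) (?X ^ j)) + ?X ^ Suc k * s"
      by (rule taylor_poly_remainder)
    have "\<phi> (hpoly (?X ^ Suc k * s)) = 0"
      using \<phi>(2)[OF hpoly_mult_in_pmultiples[of s]] by (simp add: mult.commute)
    then have "\<phi> (hpoly p) = (\<Sum>j\<le>k. Dpoly j p b / fact j * \<phi> (hpoly (?X ^ j)))"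
      by (subst s) (simp add: hpoly_add hpoly_sum hpoly_smult cfunctional_cscale[OF \<phi>(1)]
          linear_add[OF cfunctional_linear[OF \<phi>(1)]] linear_sum[OF cfunctional_linear[OF \<phi>(1)]])
    then show ?thesis
      using \<phi>(3) by (simp add: \<Lambda>_def L(2) lessThan_Suc_atMost[symmetric] field_simps)
  qed
  ultimately show ?thesis unfolding repro_iff by blast
qed

lemma closure_pmultiples_root_power_Suc:
  assumes "\<And>j. j < k \<Longrightarrow> reproducible j b" "\<not> reproducible k b"
  shows "closure (pmultiples ([:-b, 1:] ^ Suc k * f)) = closure (pmultiples ([:-b, 1:] ^ k * f))"
proof
  have "hpoly ([:-b, 1:] ^ k) \<in> closure (pmultiples ([:-b, 1:] ^ Suc k))"
    using repro_if_not_in_closure assms by blast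
  then have "pmult f (hpoly ([:-b, 1:] ^ k)) \<in> closure (pmultiples (f * [:-b, 1:] ^ Suc k))"
    using pmult_closure_pmultiples[of f] by blast
  then have "hpoly (f * [:-b, 1:] ^ k) \<in> closure (pmultiples (f * [:-b, 1:] ^ Suc k))"
    by (simp only: pmult_hpoly)
  then show "closure (pmultiples ([:-b, 1:] ^ k * f)) \<subseteq> closure (pmultiples ([:-b, 1:] ^ Suc k * f))"
    by (intro closure_pmultiples_subset) (simp add: mult.commute)
  have "[:-b, 1:] ^ Suc k * f = [:-b, 1:] * ([:-b, 1:] ^ k * f)"
    by (simp only: power_Suc mult.assoc)
  then show "closure (pmultiples ([:-b, 1:] ^ Suc k * f)) \<subseteq> closure (pmultiples ([:-b, 1:] ^ k * f))"
    using pmultiples_mult_subset by (metis closure_mono)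
qed

lemma closure_pmultiples_cancel_root:
  assumes "p \<noteq> 0" "rmult p b < order b p"
  obtains p' where "p = [:-b, 1:] * p'" "closure (pmultiples p) = closure (pmultiples p')"
proof -
  let ?k = "rmult p b"
  obtain f where "p = [:-b, 1:] ^ order b p * f" using order_1 by (blast elim: dvdE)
  moreover have "order b p = Suc ?k + (order b p - Suc ?k)" using assms(2) by simp
  ultimately have p: "p = [:-b, 1:] ^ Suc ?k * ([:-b, 1:] ^ (order b p - Suc ?k) * f)"
    by (metis power_add mult.assoc)
  show ?thesis
  proof
    show "p = [:-b, 1:] * ([:-b, 1:] ^ ?k * ([:-b, 1:] ^ (order b p - Suc ?k) * f))"
      by (subst p) (simp only: power_Suc mult.assoc)
    show "closure (pmultiples p) = closure (pmultiples ([:-b, 1:] ^ ?k * ([:-b, 1:] ^ (order b p - Suc ?k) * f)))"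
      by (subst p, rule closure_pmultiples_root_power_Suc) (use repro_less_rmult not_repro_rmult assms in auto)
  qed
qed

lemma rmult_cancel_root:
  assumes "p = [:-b, 1:] * p'" "p \<noteq> 0" "rmult p b < order b p"
  shows "rmult p' = rmult p"
proof
  fix \<gamma>
  have "order \<gamma> p = order \<gamma> [:-b, 1:] + order \<gamma> p'"
    using assms(1,2) order_mult by blast
  then have ord: "order \<gamma> p = (if \<gamma> = b then 1 else 0) + order \<gamma> p'"
    by (simp only: order_linear_factor)
  show "rmult p' \<gamma> = rmult p \<gamma>"
  proof (cases "\<gamma> = b")
    case True
    have "{j. j < order b p' \<and> reproducible j b} = {j. j < order b p \<and> reproducible j b}"
      unfolding repro_iff_less_rmult[OF assms(3)] using ord True assms(3) by auto
    then show ?thesis using True by (simp add: rmult_def)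
  qed (simp add: rmult_def ord)
qed

lemma full_reduction:
  assumes "p \<noteq> 0"
  obtains p' where "p' \<noteq> 0" "closure (pmultiples p') = closure (pmultiples p)"
    "rmult p' = rmult p" "\<And>b. rmult p' b = order b p'"
  using assms
proof (induction "degree p" arbitrary: p thesis rule: less_induct)
  case less
  show ?case
  proof (cases "\<exists>b. rmult p b < order b p")
    case True
    then obtain b where b: "rmult p b < order b p" by blast
    obtain p' where p': "p = [:-b, 1:] * p'" "closure (pmultiples p) = closure (pmultiples p')"
      using closure_pmultiples_cancel_root[OF less.prems(2) b] by blast
    have "p' \<noteq> 0" using p'(1) less.prems(2) by auto
    then have "degree p' < degree p"
      unfolding p'(1) by (simp add: degree_mult_eq del: mult_pCons_left)
    then obtain p'' where p'': "p'' \<noteq> 0" "closure (pmultiples p'') = closure (pmultiples p')"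
      "rmult p'' = rmult p'" "\<And>b. rmult p'' b = order b p''"
      using less.hyps \<open>p' \<noteq> 0\<close> by blast
    have "rmult p' = rmult p" by (rule rmult_cancel_root[OF p'(1) less.prems(2) b])
    then show ?thesis using less.prems(1)[OF p''(1)] p'' p'(2) by simp
  next
    case False
    then have "rmult p b = order b p" for b using rmult_le_order[of p b] le_antisym not_less by blast
    then show ?thesis using less.prems by blast
  qed
qed

lemma rmult_le_if_closure_pmultiples_eq:
  assumes "p \<noteq> 0" "closure (pmultiples p) = closure (pmultiples q)"
  shows "rmult q b \<le> rmult p b"
proof (rule ccontr)
  assume lt: "\<not> rmult q b \<le> rmult p b"
  let ?a = "rmult p b"
  have "reproducible ?a b" using lt repro_less_rmult[of ?a q b] by simp
  then have a: "?a = order b p" using not_repro_rmult rmult_le_order le_neq_trans by blast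
  obtain L where L: "cfunctional L" "\<And>r. L (hpoly r) = Dpoly ?a r b"
    using \<open>reproducible ?a b\<close> unfolding repro_iff by blast
  have "order b p < order b q" using a lt rmult_le_order[of q b] by simp
  then have "L x = 0" if "x \<in> pmultiples q" for x
    using that order_1[of b q] by (auto simp: pmultiples_def L(2) a
        intro!: Dpoly_eq_0_if_root_power_dvd dvd_mult)
  then have "closure (pmultiples q) \<subseteq> {x. L x = 0}"
    using L(1) by (intro closure_minimal)
      (auto simp: cfunctional_def intro: closed_Collect_eq linear_continuous_on)
  moreover have "hpoly p \<in> closure (pmultiples q)"
    using assms(2) hpoly_in_pmultiples closure_subset by blast
  ultimately show False
    using L(2)[of p] Dpoly_order_neq_0[OF assms(1)] a by auto
qed

lemma closure_pmultiples_eq_iff: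
  assumes "p \<noteq> 0" "q \<noteq> 0"
  shows "closure (pmultiples p) = closure (pmultiples q) \<longleftrightarrow> rmult p = rmult q"
proof
  assume "closure (pmultiples p) = closure (pmultiples q)"
  then show "rmult p = rmult q"
    using assms rmult_le_if_closure_pmultiples_eq by (intro ext le_antisym) metis+
next
  assume eq: "rmult p = rmult q"
  obtain p' where p': "p' \<noteq> 0" "closure (pmultiples p') = closure (pmultiples p)"
    "rmult p' = rmult p" "\<And>b. rmult p' b = order b p'"
    using full_reduction[OF assms(1)] by blast
  obtain q' where q': "q' \<noteq> 0" "closure (pmultiples q') = closure (pmultiples q)"
    "rmult q' = rmult q" "\<And>b. rmult q' b = order b q'"
    using full_reduction[OF assms(2)] by blast
  have "p' = smult (lead_coeff p' / lead_coeff q') q'"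
    using p' q' eq by (intro complex_poly_eq_smult_if_order_eq) metis+
  then have "pmultiples p' = pmultiples q'"
    using p'(1) q'(1) pmultiples_smult by (metis divide_eq_0_iff leading_coeff_0_iff)
  then show "closure (pmultiples p) = closure (pmultiples q)" using p'(2) q'(2) by simp
qed

end

theorem mainTheorem8:
  fixes \<Omega> :: "complex set" and J :: "'h::{real_inner,complete_space} \<Rightarrow> 'h"
    and ev :: "'h \<Rightarrow> complex \<Rightarrow> complex" and p q :: "complex poly"
  assumes "hfs \<Omega> J ev" and "p \<noteq> 0" and "q \<noteq> 0"
  shows "cyc \<Omega> ev (poly p) = cyc \<Omega> ev (poly q) \<longleftrightarrow> Rz \<Omega> J ev p = Rz \<Omega> J ev q"
proof -
  interpret hfs_space \<Omega> J ev by unfold_locales (rule assms(1))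
  have "Rz \<Omega> J ev p = Rz \<Omega> J ev q \<longleftrightarrow> rmult p = rmult q"
    using count_Rz assms(2,3) by (simp add: multiset_eq_iff fun_eq_iff)
  then show ?thesis
    using closure_pmultiples_eq_iff[OF assms(2,3)] by (simp add: cyc_eq_closure_pmultiples)
qed

end
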